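(* Let $X$ be a d-space, $X_1,X_2\subseteq X$ with $X=\mathrm{Int}(X_1)\cup\mathrm{Int}(X_2)$, the dipaths of $X$ being the finite concatenations of dipaths of $X_1$ and $X_2$, and $X_0=X_1\cap X_2$. For $k=0,1,2$ let $X_k=X_{k,0}\supseteq X_{k,1}\supseteq\dots\supseteq X_{k,n}=A_k$ with functors $P_{k,\ell}:\vec\pi_1(X_k,X_{k,\ell-1})\to\vec\pi_1(X_k,X_{k,\ell})$ be compatible chains of future retracts and past retracts, each of which is an extremal model of $X_k$ (i.e. $\mathrm{Ext}(X_k)\subseteq A_k$) with all $X_{k,\ell}$ compact. Let $A=A_1\cup A_2$ and let $\vec\pi_1(X)\xrightarrow{P_1}\vec\pi_1(X,X_1)\to\dots\xrightarrow{P_n}\vec\pi_1(X,A)$, where $X_\ell=X_{1,\ell}\cup X_{2,\ell}$, be the pushout chain of future and past retracts (with $P_\ell$ the unique functor satisfying $P_\ell\circ j_{k,\ell-1}=j_{k,\ell}\circ P_{k,\ell}$ for $k=1,2$, $j_{k,m}:\vec\pi_1(X_k,X_{k,m})\to\vec\pi_1(X,X_m)$ induced by inclusion). Then this chain is an extremal model of $X$, i.e. $\mathrm{Ext}(X)\subseteq A$.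
   Context: A d-space is a topological space with a set of continuous paths $[0,1]\to X$ (dipaths) containing all constant paths, closed under precomposition with continuous non-decreasing maps $[0,1]\to[0,1]$ and under concatenation; subsets carry the dipaths with image in them. The fundamental category $\vec\pi_1(X)$ has objects the points of $X$ and morphisms $a\to b$ the classes of dipaths from $a$ to $b$ modulo the equivalence relation generated by endpoint-fixing directed homotopies; composition is concatenation. For $A\subseteq X$, $\vec\pi_1(X,A)$ is the full subcategory on objects in $A$; inclusions induce functors. For $A\subseteq B\subseteq X$ with inclusion $\iota:\vec\pi_1(X,A)\to\vec\pi_1(X,B)$, a future retract is a functor $P:\vec\pi_1(X,B)\to\vec\pi_1(X,A)$ left adjoint to $\iota$ whose unit satisfies $\eta_a=\mathrm{id}_a$ for $a\in A$; a past retract is a right adjoint $P$ of $\iota$ whose counit satisfies $\varepsilon_a=\mathrm{id}_a$ for $a\in A$. For a category $\mathcal C$, $x\le y$ iff there is a morphism $x\to y$; $a$ is minimal if $x\le a\Rightarrow x=a$, maximal if $a\le x\Rightarrow x=a$, extremal if either; $\mathrm{Ext}(\mathcal C)$ is the set of extremal objects, $\mathrm{Ext}(X)=\mathrm{Ext}(\vec\pi_1(X))$. An extremal model of a d-space $Y$ is a chain $Y=Y_0\supseteq\dots\supseteq Y_n=A$ with functors $\vec\pi_1(Y,Y_{i-1})\to\vec\pi_1(Y,Y_i)$, each a future or past retract, such that $\mathrm{Ext}(Y)\subseteq A$. Compatible chains: for each $\ell$, $P_{0,\ell},P_{1,\ell},P_{2,\ell}$ are all future retracts or all past retracts; $X_{0,\ell}=X_{1,\ell}\cap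 X_{2,\ell}$; $X_\ell=X_{1,\ell}\cup X_{2,\ell}$ satisfies $X_\ell=\mathrm{Int}_{X_\ell}(X_{1,\ell})\cup\mathrm{Int}_{X_\ell}(X_{2,\ell})$; $P_{k,\ell}\circ i_{k,\ell-1}=i_{k,\ell}\circ P_{0,\ell}$ for $k=1,2$, where $i_{k,m}:\vec\pi_1(X_0,X_{0,m})\to\vec\pi_1(X_k,X_{k,m})$ is induced by inclusion; and units (resp. counits) of $P_{0,\ell}$ map to those of $P_{k,\ell}$ under $\vec\pi_1(X_0)\to\vec\pi_1(X_k)$. *)

theory Defs
  imports "HOL-Analysis.Analysis"
begin

(* A d-space: topology T (carrier topspace T) and a set D of dipaths.
   Paths are functions real => 'a; only their values on [0,1] are relevant. *)

definition djoin :: "(real \<Rightarrow> 'a) \<Rightarrow> (real \<Rightarrow> 'a) \<Rightarrow> real \<Rightarrow> 'a" where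
  "djoin g h = (\<lambda>t. if t \<le> 1/2 then g (2 * t) else h (2 * t - 1))"

definition dinc :: "(real \<Rightarrow> real) \<Rightarrow> bool" where
  "dinc \<phi> \<longleftrightarrow> continuous_map (top_of_set {0..1}) (top_of_set {0..1}) \<phi> \<and> mono_on {0..1} \<phi>"

definition dspace :: "'a topology \<Rightarrow> (real \<Rightarrow> 'a) set \<Rightarrow> bool" where
  "dspace T D \<longleftrightarrow>
     (\<forall>g\<in>D. continuous_map (top_of_set {0..1}) T g) \<and>
     (\<forall>x\<in>topspace T. (\<lambda>_. x) \<in> D) \<and>
     (\<forall>g\<in>D. \<forall>\<phi>. dinc \<phi> \<longrightarrow> g \<circ> \<phi> \<in> D) \<and>
     (\<forall>g\<in>D. \<forall>h\<in>D. g 1 = h 0 \<longrightarrow> djoin g h \<in> D)"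

definition dpaths :: "(real \<Rightarrow> 'a) set \<Rightarrow> 'a set \<Rightarrow> (real \<Rightarrow> 'a) set" where
  "dpaths D S = {g\<in>D. g ` {0..1} \<subseteq> S}"

(* one endpoint-fixing directed homotopy inside the subspace S from g to h:
   a continuous map H on [0,1]x[0,1] which is a d-map from the product d-space
   (up-I) x (up-I) to S *)
definition dhtpy :: "'a topology \<Rightarrow> (real \<Rightarrow> 'a) set \<Rightarrow> 'a set \<Rightarrow> (real \<Rightarrow> 'a) \<Rightarrow> (real \<Rightarrow> 'a) \<Rightarrow> bool" where
  "dhtpy T D S g h \<longleftrightarrow> g \<in> dpaths D S \<and> h \<in> dpaths D S \<and>
     (\<exists>H. continuous_map (top_of_set ({0..1} \<times> {0..1})) T H \<and>
          H ` ({0..1} \<times> {0..1}) \<subseteq> S \<and>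
          (\<forall>\<phi> \<psi>. dinc \<phi> \<and> dinc \<psi> \<longrightarrow> (\<lambda>t. H (\<phi> t, \<psi> t)) \<in> D) \<and>
          (\<forall>t\<in>{0..1}. H (t, 0) = g t \<and> H (t, 1) = h t) \<and>
          (\<forall>s\<in>{0..1}. H (0, s) = g 0 \<and> H (1, s) = g 1))"

definition dheq :: "'a topology \<Rightarrow> (real \<Rightarrow> 'a) set \<Rightarrow> 'a set \<Rightarrow> (real \<Rightarrow> 'a) \<Rightarrow> (real \<Rightarrow> 'a) \<Rightarrow> bool" where
  "dheq T D S = (\<lambda>g h. dhtpy T D S g h \<or> dhtpy T D S h g)\<^sup>*\<^sup>*"

(* morphism of the fundamental category of S represented by a dipath g *)
definition dhcls :: "'a topology \<Rightarrow> (real \<Rightarrow> 'a) set \<Rightarrow> 'a set \<Rightarrow> (real \<Rightarrow> 'a) \<Rightarrow> (real \<Rightarrow> 'a) set" where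
  "dhcls T D S g = {h \<in> dpaths D S. dheq T D S g h}"

definition dhom :: "'a topology \<Rightarrow> (real \<Rightarrow> 'a) set \<Rightarrow> 'a set \<Rightarrow> 'a \<Rightarrow> 'a \<Rightarrow> (real \<Rightarrow> 'a) set set" where
  "dhom T D S a b = {dhcls T D S g | g. g \<in> dpaths D S \<and> g 0 = a \<and> g 1 = b}"

definition didm :: "'a topology \<Rightarrow> (real \<Rightarrow> 'a) set \<Rightarrow> 'a set \<Rightarrow> 'a \<Rightarrow> (real \<Rightarrow> 'a) set" where
  "didm T D S a = dhcls T D S (\<lambda>_. a)"

(* composition in diagrammatic order: first f, then g (concatenation) *)
definition dcmp :: "'a topology \<Rightarrow> (real \<Rightarrow> 'a) set \<Rightarrow> 'a set \<Rightarrow> (real \<Rightarrow> 'a) set \<Rightarrow> (real \<Rightarrow> 'a) set \<Rightarrow> (real \<Rightarrow> 'a) set" where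
  "dcmp T D S f g = dhcls T D S (djoin (SOME p. p \<in> f) (SOME q. q \<in> g))"

(* (Fo, Fm) is a functor from the fundamental category of S restricted to B
   (full subcategory on B) to the one restricted to A *)
definition dfunctor :: "'a topology \<Rightarrow> (real \<Rightarrow> 'a) set \<Rightarrow> 'a set \<Rightarrow> 'a set \<Rightarrow> 'a set \<Rightarrow>
    ('a \<Rightarrow> 'a) \<Rightarrow> ((real \<Rightarrow> 'a) set \<Rightarrow> (real \<Rightarrow> 'a) set) \<Rightarrow> bool" where
  "dfunctor T D S B A Fo Fm \<longleftrightarrow>
     (\<forall>b\<in>B. Fo b \<in> A) \<and>
     (\<forall>a\<in>B. \<forall>b\<in>B. \<forall>f\<in>dhom T D S a b. Fm f \<in> dhom T D S (Fo a) (Fo b)) \<and>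
     (\<forall>a\<in>B. Fm (didm T D S a) = didm T D S (Fo a)) \<and>
     (\<forall>a\<in>B. \<forall>b\<in>B. \<forall>c\<in>B. \<forall>f\<in>dhom T D S a b. \<forall>g\<in>dhom T D S b c.
        Fm (dcmp T D S f g) = dcmp T D S (Fm f) (Fm g))"

(* future retract: (Fo,Fm) left adjoint of the inclusion with unit u, u_a = id on A *)
definition future_retract :: "'a topology \<Rightarrow> (real \<Rightarrow> 'a) set \<Rightarrow> 'a set \<Rightarrow> 'a set \<Rightarrow> 'a set \<Rightarrow>
    ('a \<Rightarrow> 'a) \<Rightarrow> ((real \<Rightarrow> 'a) set \<Rightarrow> (real \<Rightarrow> 'a) set) \<Rightarrow> ('a \<Rightarrow> (real \<Rightarrow> 'a) set) \<Rightarrow> bool" where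
  "future_retract T D S B A Fo Fm u \<longleftrightarrow>
     A \<subseteq> B \<and> dfunctor T D S B A Fo Fm \<and>
     (\<forall>b\<in>B. u b \<in> dhom T D S b (Fo b)) \<and>
     (\<forall>b\<in>B. \<forall>b'\<in>B. \<forall>f\<in>dhom T D S b b'.
        dcmp T D S f (u b') = dcmp T D S (u b) (Fm f)) \<and>
     (\<forall>b\<in>B. \<forall>a\<in>A. bij_betw (\<lambda>g. dcmp T D S (u b) g) (dhom T D S (Fo b) a) (dhom T D S b a)) \<and>
     (\<forall>a\<in>A. u a = didm T D S a)"

(* past retract: (Fo,Fm) right adjoint of the inclusion with counit c, c_a = id on A *)
definition past_retract :: "'a topology \<Rightarrow> (real \<Rightarrow> 'a) set \<Rightarrow> 'a set \<Rightarrow> 'a set \<Rightarrow> 'a set \<Rightarrow>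
    ('a \<Rightarrow> 'a) \<Rightarrow> ((real \<Rightarrow> 'a) set \<Rightarrow> (real \<Rightarrow> 'a) set) \<Rightarrow> ('a \<Rightarrow> (real \<Rightarrow> 'a) set) \<Rightarrow> bool" where
  "past_retract T D S B A Fo Fm c \<longleftrightarrow>
     A \<subseteq> B \<and> dfunctor T D S B A Fo Fm \<and>
     (\<forall>b\<in>B. c b \<in> dhom T D S (Fo b) b) \<and>
     (\<forall>b\<in>B. \<forall>b'\<in>B. \<forall>f\<in>dhom T D S b b'.
        dcmp T D S (c b) f = dcmp T D S (Fm f) (c b')) \<and>
     (\<forall>b\<in>B. \<forall>a\<in>A. bij_betw (\<lambda>g. dcmp T D S g (c b)) (dhom T D S a (Fo b)) (dhom T D S a b)) \<and>
     (\<forall>a\<in>A. c a = didm T D S a)"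

definition dle :: "'a topology \<Rightarrow> (real \<Rightarrow> 'a) set \<Rightarrow> 'a set \<Rightarrow> 'a \<Rightarrow> 'a \<Rightarrow> bool" where
  "dle T D S x y \<longleftrightarrow> dhom T D S x y \<noteq> {}"

definition dExt :: "'a topology \<Rightarrow> (real \<Rightarrow> 'a) set \<Rightarrow> 'a set \<Rightarrow> 'a set" where
  "dExt T D S = {x \<in> S. (\<forall>y\<in>S. dle T D S y x \<longrightarrow> y = x) \<or> (\<forall>y\<in>S. dle T D S x y \<longrightarrow> y = x)}"

end

theory Submission
  imports Defs
begin

(* Extremality only becomes easier to satisfy in a smaller space:
   a dipath inside a subspace S is a dipath inside any S' containing S, so the
   order "there is a morphism x -> y" of the fundamental category of S is
   contained in that of S'.  Hence a point that is minimal (maximal) in S' and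
   lies in S is minimal (maximal) in S.  If X is covered by X1 and X2, every
   extremal point of X is therefore extremal in X1 or in X2, and the hypothesis
   that the chains for X1 and X2 are extremal models puts it into A1 or A2. *)

lemma dle_iff_dpath: "dle T D S x y \<longleftrightarrow> (\<exists>g\<in>dpaths D S. g 0 = x \<and> g 1 = y)"
  unfolding dle_def dhom_def by blast

lemma dle_mono_subspace:
  assumes "S \<subseteq> S'" and "dle T D S x y"
  shows "dle T D S' x y"
  using assms unfolding dle_iff_dpath dpaths_def by blast

lemma dExt_subspace:
  assumes sub: "S \<subseteq> S'" and "x \<in> S" and ext: "x \<in> dExt T D S'"
  shows "x \<in> dExt T D S"
proof -
  have "(\<forall>y\<in>S'. dle T D S' y x \<longrightarrow> y = x) \<or> (\<forall>y\<in>S'. dle T D S' x y \<longrightarrow> y = x)"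
    using ext unfolding dExt_def by simp
  then have "(\<forall>y\<in>S. dle T D S y x \<longrightarrow> y = x) \<or> (\<forall>y\<in>S. dle T D S x y \<longrightarrow> y = x)"
    using dle_mono_subspace[OF sub] sub by blast
  then show ?thesis
    using \<open>x \<in> S\<close> unfolding dExt_def by simp
qed

lemma dExt_cover:
  assumes "S1 \<subseteq> S" and "S2 \<subseteq> S" and "S \<subseteq> S1 \<union> S2"
  shows "dExt T D S \<subseteq> dExt T D S1 \<union> dExt T D S2"
proof
  fix x assume x: "x \<in> dExt T D S"
  then have "x \<in> S1 \<or> x \<in> S2"
    using assms(3) unfolding dExt_def by blast
  then show "x \<in> dExt T D S1 \<union> dExt T D S2"
    using dExt_subspace[OF assms(1) _ x] dExt_subspace[OF assms(2) _ x] by blast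
qed

theorem theorem4p9:
  fixes T :: "'a topology" and D :: "(real \<Rightarrow> 'a) set"
    and X1 X2 :: "'a set" and n :: nat
    and C :: "nat \<Rightarrow> nat \<Rightarrow> 'a set"
    and fut :: "nat \<Rightarrow> bool"
    and Po :: "nat \<Rightarrow> nat \<Rightarrow> 'a \<Rightarrow> 'a"
    and Pm :: "nat \<Rightarrow> nat \<Rightarrow> (real \<Rightarrow> 'a) set \<Rightarrow> (real \<Rightarrow> 'a) set"
    and \<theta> :: "nat \<Rightarrow> nat \<Rightarrow> 'a \<Rightarrow> (real \<Rightarrow> 'a) set"
  assumes dsp: "dspace T D"
    and X1: "X1 \<subseteq> topspace T" and X2: "X2 \<subseteq> topspace T"
    and cover: "topspace T = (T interior_of X1) \<union> (T interior_of X2)"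
    and concat: "\<forall>g\<in>D. \<exists>m t. t 0 = 0 \<and> t m = (1::real) \<and> (\<forall>i<m. t i \<le> t (Suc i)) \<and>
                   (\<forall>i<m. g ` {t i..t (Suc i)} \<subseteq> X1 \<or> g ` {t i..t (Suc i)} \<subseteq> X2)"
    and C00: "C 0 0 = X1 \<inter> X2" and C10: "C 1 0 = X1" and C20: "C 2 0 = X2"
    and decr: "\<forall>k\<le>2. \<forall>l<n. C k (Suc l) \<subseteq> C k l"
    and cpt: "\<forall>k\<le>2. \<forall>l\<le>n. compactin T (C k l)"
    and inter: "\<forall>l\<le>n. C 0 l = C 1 l \<inter> C 2 l"
    and intcov: "\<forall>l\<le>n. C 1 l \<union> C 2 l =
                   (subtopology T (C 1 l \<union> C 2 l) interior_of C 1 l) \<union>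
                   (subtopology T (C 1 l \<union> C 2 l) interior_of C 2 l)"
    and retr: "\<forall>k\<le>2. \<forall>l\<in>{1..n}.
                 (fut l \<longrightarrow> future_retract T D (C k 0) (C k (l - 1)) (C k l) (Po k l) (Pm k l) (\<theta> k l)) \<and>
                 (\<not> fut l \<longrightarrow> past_retract T D (C k 0) (C k (l - 1)) (C k l) (Po k l) (Pm k l) (\<theta> k l))"
    and compat_obj: "\<forall>k\<in>{1,2}. \<forall>l\<in>{1..n}. \<forall>a\<in>C 0 (l - 1). Po k l a = Po 0 l a"
    and compat_mor: "\<forall>k\<in>{1,2}. \<forall>l\<in>{1..n}. \<forall>g\<in>dpaths D (C 0 0).
                 g 0 \<in> C 0 (l - 1) \<and> g 1 \<in> C 0 (l - 1) \<longrightarrow>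
                 (\<forall>h\<in>Pm 0 l (dhcls T D (C 0 0) g).
                    Pm k l (dhcls T D (C k 0) g) = dhcls T D (C k 0) h)"
    and compat_unit: "\<forall>k\<in>{1,2}. \<forall>l\<in>{1..n}. \<forall>a\<in>C 0 (l - 1).
                 \<forall>h\<in>\<theta> 0 l a. \<theta> k l a = dhcls T D (C k 0) h"
    and extr: "\<forall>k\<le>2. dExt T D (C k 0) \<subseteq> C k n"
  shows "dExt T D (topspace T) \<subseteq> C 1 n \<union> C 2 n"
proof -
  have "topspace T \<subseteq> X1 \<union> X2"
    using cover interior_of_subset[of T X1] interior_of_subset[of T X2] by blast
  then have "dExt T D (topspace T) \<subseteq> dExt T D (C 1 0) \<union> dExt T D (C 2 0)"
    using dExt_cover[OF X1 X2] C10 C20 by simp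
  also have "\<dots> \<subseteq> C 1 n \<union> C 2 n"
    using extr[rule_format, of 1] extr[rule_format, of 2] by auto
  finally show ?thesis .
qed

end
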